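(* Consider binary variables $Y,X_M,X_1\in\{0,1\}$ with DAG $Y\to X_M$, $Y\to X_1$, $X_M\to X_1$, where $X_1$ is stable (its mechanism $P(X_1\mid X_M,Y)$ and $P(Y)$ are the same in all environments) and $X_M$ is mutable (its mechanism $P^e(X_M\mid Y)$ may be arbitrary in environment $e$). Let $\mathcal{E}$ be the set of all such environments. Then there exist $P(Y)$ and $P(X_1\mid X_M,Y)$ such that $\max_{e\in\mathcal{E}}\mathbb{E}_{P^e}[(Y-f_S(\mathbf{X}))^2]>\max_{e\in\mathcal{E}}\mathbb{E}_{P^e}[(Y-f_\emptyset(\mathbf{X}))^2]$, where $f_S(\boldsymbol x):=\mathbb{E}[Y\mid x_1,do(x_M)]$ and $f_\emptyset(\boldsymbol x):=\mathbb{E}[Y\mid do(x_M)]$.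
   Context: Interventional distributions are defined by truncated factorization: $P(Y,X_1\mid do(X_M=x_M))=P(Y)P(X_1\mid x_M,Y)$, so $\mathbb{E}[Y\mid x_1,do(x_M)]=\frac{P(Y=1)P(x_1\mid x_M,Y=1)}{\sum_{y}P(y)P(x_1\mid x_M,y)}$ and $\mathbb{E}[Y\mid do(x_M)]=\mathbb{E}[Y]$. *)

theory Defs
  imports Complex_Main
begin

text \<open>Binary variables take values in {0,1} (as nat).
  bern a v = probability of value v for a Bernoulli(a) variable.\<close>
definition bern :: "real \<Rightarrow> nat \<Rightarrow> real" where
  "bern a v = (if v = 1 then a else 1 - a)"

text \<open>Stable parameters: pY = P(Y=1); q xm y = P(X1=1 | X_M=xm, Y=y).
  Environment r: r y = P^e(X_M=1 | Y=y).
  Joint distribution P^e(Y=y, X_M=xm, X_1=x1) by the DAG factorization.\<close>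
definition joint :: "real \<Rightarrow> (nat \<Rightarrow> nat \<Rightarrow> real) \<Rightarrow> (nat \<Rightarrow> real) \<Rightarrow> nat \<Rightarrow> nat \<Rightarrow> nat \<Rightarrow> real" where
  "joint pY q r y xm x1 = bern pY y * bern (r y) xm * bern (q xm y) x1"

definition envs :: "(nat \<Rightarrow> real) set" where
  "envs = {r. \<forall>y\<in>{0,1}. 0 \<le> r y \<and> r y \<le> 1}"

text \<open>f_S(x) = E[Y | x1, do(xm)] by truncated factorization.\<close>
definition fS :: "real \<Rightarrow> (nat \<Rightarrow> nat \<Rightarrow> real) \<Rightarrow> nat \<Rightarrow> nat \<Rightarrow> real" where
  "fS pY q xm x1 = bern pY 1 * bern (q xm 1) x1 / (\<Sum>y\<in>{0,1}. bern pY y * bern (q xm y) x1)"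

text \<open>f_empty(x) = E[Y | do(xm)] = E[Y].\<close>
definition fE :: "real \<Rightarrow> nat \<Rightarrow> nat \<Rightarrow> real" where
  "fE pY xm x1 = (\<Sum>y\<in>{0,1}. real y * bern pY y)"

definition risk :: "real \<Rightarrow> (nat \<Rightarrow> nat \<Rightarrow> real) \<Rightarrow> (nat \<Rightarrow> real) \<Rightarrow> (nat \<Rightarrow> nat \<Rightarrow> real) \<Rightarrow> real" where
  "risk pY q r f = (\<Sum>y\<in>{0,1}. \<Sum>xm\<in>{0,1}. \<Sum>x1\<in>{0,1}.
      joint pY q r y xm x1 * (real y - f xm x1)^2)"

end

theory Submission
  imports Defs
begin

text \<open>Take \<open>P(Y=1) = 1/4\<close>, let \<open>X\<^sub>1 = 0\<close> when \<open>X\<^sub>M = 1\<close>, and when \<open>X\<^sub>M = 0\<close>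
  let \<open>X\<^sub>1 = 1\<close> with probability 1 if \<open>Y = 1\<close> and 1/3 if \<open>Y = 0\<close>. The constant predictor
  \<open>f\<^sub>\<emptyset> = E[Y]\<close> has risk \<open>Var(Y) = 3/16\<close> in every environment. The interventional predictor
  \<open>f\<^sub>S\<close> ignores that \<open>X\<^sub>M\<close> itself carries information on \<open>Y\<close>: in the environment \<open>X\<^sub>M = Y\<close>
  it still predicts \<open>1/4\<close> when \<open>X\<^sub>M = 1\<close>, although then \<open>Y = 1\<close> surely, and its risk there
  is \<open>13/64 > 3/16\<close>.\<close>

lemma bern_nonneg: "0 \<le> a \<Longrightarrow> a \<le> 1 \<Longrightarrow> 0 \<le> bern a v"
  by (simp add: bern_def)

lemma sum_joint: "(\<Sum>y\<in>{0,1}. \<Sum>xm\<in>{0,1}. \<Sum>x1\<in>{0,1}. joint pY q r y xm x1) = 1"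
  by (simp add: joint_def bern_def algebra_simps)

lemma joint_nonneg:
  assumes "0 \<le> pY" "pY \<le> 1" "\<forall>xm\<in>{0,1}. \<forall>y\<in>{0,1}. 0 \<le> q xm y \<and> q xm y \<le> 1"
    and "r \<in> envs" "y \<in> {0,1}" "xm \<in> {0,1}"
  shows "0 \<le> joint pY q r y xm x1"
  using assms unfolding joint_def envs_def by (intro mult_nonneg_nonneg bern_nonneg) auto

lemma risk_le_1:
  assumes "0 \<le> pY" "pY \<le> 1" "\<forall>xm\<in>{0,1}. \<forall>y\<in>{0,1}. 0 \<le> q xm y \<and> q xm y \<le> 1"
    and "r \<in> envs" and f: "\<forall>xm\<in>{0,1}. \<forall>x1\<in>{0,1}. 0 \<le> f xm x1 \<and> f xm x1 \<le> 1"
  shows "risk pY q r f \<le> 1"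
proof -
  have "risk pY q r f \<le> (\<Sum>y\<in>{0,1}. \<Sum>xm\<in>{0,1}. \<Sum>x1\<in>{0,1}. joint pY q r y xm x1)"
    unfolding risk_def
  proof (intro sum_mono)
    fix y xm x1 :: nat assume "y \<in> {0,1}" "xm \<in> {0,1}" "x1 \<in> {0,1}"
    moreover from this f have "(real y - f xm x1)\<^sup>2 \<le> 1"
      by (auto simp: abs_le_iff intro!: abs_square_le_1[THEN iffD2])
    ultimately show "joint pY q r y xm x1 * (real y - f xm x1)\<^sup>2 \<le> joint pY q r y xm x1"
      using assms joint_nonneg by (simp add: mult_left_le)
  qed
  then show ?thesis
    by (simp only: sum_joint)
qed

lemma fS_bounds:
  assumes "0 \<le> pY" "pY \<le> 1" "\<forall>xm\<in>{0,1}. \<forall>y\<in>{0,1}. 0 \<le> q xm y \<and> q xm y \<le> 1"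
    and "xm \<in> {0,1}"
  shows "0 \<le> fS pY q xm x1 \<and> fS pY q xm x1 \<le> 1"
proof -
  define a where "a = bern pY 1 * bern (q xm 1) x1"
  define b where "b = bern pY 0 * bern (q xm 0) x1"
  have "0 \<le> a" "0 \<le> b"
    unfolding a_def b_def using assms by (auto intro!: mult_nonneg_nonneg bern_nonneg)
  moreover have "fS pY q xm x1 = a / (b + a)"
    by (simp add: fS_def a_def b_def)
  ultimately show ?thesis
    by (simp add: divide_le_eq_1 add_pos_nonneg order_less_le)
qed

lemma risk_fE: "risk pY q r (fE pY) = pY * (1 - pY)"
proof -
  have "risk pY q r (fE pY) = (\<Sum>y\<in>{0,1}. bern pY y * (real y - pY)\<^sup>2)"
    by (simp add: risk_def joint_def fE_def bern_def algebra_simps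
        flip: sum_distrib_left sum_distrib_right)
  also have "\<dots> = pY * (1 - pY)"
    by (simp add: bern_def power2_eq_square algebra_simps)
  finally show ?thesis .
qed

text \<open>As an environment, \<open>real\<close> means \<open>P(X\<^sub>M = 1 | Y = y) = y\<close>, i.e. \<open>X\<^sub>M = Y\<close>.\<close>

lemma real_in_envs: "real \<in> envs"
  by (simp add: envs_def)

lemma SUP_risk_fE: "(SUP r\<in>envs. risk pY q r (fE pY)) = pY * (1 - pY)"
proof -
  have "envs \<noteq> {}"
    using real_in_envs by blast
  then show ?thesis
    by (simp add: risk_fE)
qed

definition counter_mech :: "nat \<Rightarrow> nat \<Rightarrow> real" where
  "counter_mech xm y = (if xm = 0 then (if y = 1 then 1 else 1/3) else 0)"

lemma risk_fS_counter_mech_real: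
  "risk (1/4) counter_mech real (fS (1/4) counter_mech) = 13/64"
  by (simp add: risk_def joint_def bern_def fS_def counter_mech_def power2_eq_square)

theorem mainTheorem3:
  shows "\<exists>pY q. 0 \<le> pY \<and> pY \<le> 1 \<and>
     (\<forall>xm\<in>{0,1}. \<forall>y\<in>{0,1}. 0 \<le> q xm y \<and> q xm y \<le> (1::real)) \<and>
     (SUP r\<in>envs. risk pY q r (fS pY q)) > (SUP r\<in>envs. risk pY q r (fE pY))"
proof -
  let ?pY = "1/4 :: real" and ?q = counter_mech
  have q: "\<forall>xm\<in>{0,1}. \<forall>y\<in>{0,1}. 0 \<le> ?q xm y \<and> ?q xm y \<le> 1"
    by (simp add: counter_mech_def)
  then have "bdd_above ((\<lambda>r. risk ?pY ?q r (fS ?pY ?q)) ` envs)"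
    by (intro bdd_aboveI2[where M = 1] risk_le_1) (auto simp: fS_bounds)
  then have "13/64 \<le> (SUP r\<in>envs. risk ?pY ?q r (fS ?pY ?q))"
    using cSUP_upper[OF real_in_envs] by (simp flip: risk_fS_counter_mech_real)
  then have "(SUP r\<in>envs. risk ?pY ?q r (fS ?pY ?q)) > (SUP r\<in>envs. risk ?pY ?q r (fE ?pY))"
    by (simp add: SUP_risk_fE)
  with q show ?thesis
    by (intro exI[of _ ?pY] exI[of _ ?q]) simp
qed

end
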